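(* Let $\alpha_U,\alpha_W,\nu,\mu,k,\mu_U,\mu_W$ be positive parameters, $u^\sharp>0$, and positive thresholds $\underline{L_U},\underline{A_U},\overline{L_W},\overline{A_W}$. For $x=(L_U,A_U,L_W,A_W)\in\mathbb{R}_+^4$ and $u\in[0,u^\sharp]$ define $$f(x,u)=\big(F_L(x),F_A(x),G_L(x)+u,G_A(x)\big),$$ where $F_L(x)=\alpha_U A_U\frac{A_U}{A_U+A_W}-\nu L_U-\mu(1+k(L_U+L_W))L_U$ (extended by continuity, i.e. with the first term equal to $0$, when $A_U=A_W=0$), $F_A(x)=\nu L_U-\mu_U A_U$, $G_L(x)=\alpha_W A_W-\nu L_W-\mu(1+k(L_U+L_W))L_W$, $G_A(x)=\nu L_W-\mu_W A_W$. Let $\mathbb{D}=\{(L_U,A_U,L_W,A_W,u)\in\mathbb{R}_+^4\times[0,u^\sharp]: L_U\le\underline{L_U},\ A_U\le\underline{A_U},\ L_W\ge\overline{L_W},\ A_W\ge\overline{A_W}\}$, and define $f^\sharp:\mathbb{R}_+^4\times[0,u^\sharp]\to\mathbb{R}^4$ by $f^\sharp(x,u)=f(x,u^\sharp)$. Then $$\mathbb{V}(f,\mathbb{D})=\mathbb{V}(f^\sharp,\mathbb{D}).$$ Equivalently, $x_0\in\mathbb{R}_+^4$ belongs to $\mathbb{V}(f,\mathbb{D})$ if and only if the solution of $\dot x(t)=f(x(t),u^\sharp)$, $x(0)=x_0$, satisfies $(x(t),u^\sharp)\in\mathbb{D}$ for all $t\ge0$.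
   Context: Here $\mathbb{X}=\mathbb{R}_+^4$, $\mathbb{U}=[0,u^\sharp]$, and the set of control paths is $\mathcal{U}=\{u(\cdot):[0,+\infty)\to[0,u^\sharp]\text{ measurable}\}$. For a dynamics $f$ (resp. $f^\sharp$) and $u(\cdot)\in\mathcal{U}$, $\Psi_f(t,x_0,u(\cdot))$ denotes the solution at time $t$ of $\dot x(t)=f(x(t),u(t))$, $x(0)=x_0$ (these solutions exist, are unique, stay in $\mathbb{R}_+^4$ and are defined for all $t\ge0$). The viability kernel for a desirable set $\mathbb{D}\subset\mathbb{X}\times\mathbb{U}$ is $\mathbb{V}(f,\mathbb{D})=\{x_0\in\mathbb{X}:\exists u(\cdot)\in\mathcal{U},\ (\Psi_f(t,x_0,u(\cdot)),u(t))\in\mathbb{D}\ \forall t\ge0\}$. *)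

theory Defs
  imports "HOL-Analysis.Analysis"
begin

type_synonym state = "real \<times> real \<times> real \<times> real"  (* (L_U, A_U, L_W, A_W) *)

definition stateX :: "state set" where
  "stateX = {(a, b, c, d). 0 \<le> a \<and> 0 \<le> b \<and> 0 \<le> c \<and> 0 \<le> d}"

definition admissible_control :: "real \<Rightarrow> (real \<Rightarrow> real) \<Rightarrow> bool" where
  "admissible_control us u \<longleftrightarrow>
     u \<in> borel_measurable (restrict_space lebesgue {0..}) \<and> (\<forall>t\<ge>0. u t \<in> {0..us})"

definition is_solution :: "(state \<Rightarrow> real \<Rightarrow> state) \<Rightarrow> (real \<Rightarrow> real) \<Rightarrow> state \<Rightarrow> (real \<Rightarrow> state) \<Rightarrow> bool" where
  "is_solution F u x0 x \<longleftrightarrow> x 0 = x0 \<and> (\<forall>t\<ge>0. x t \<in> stateX) \<and>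
     (\<forall>t\<ge>0. ((\<lambda>s. F (x s) (u s)) has_integral (x t - x0)) {0..t})"

definition viab :: "(state \<Rightarrow> real \<Rightarrow> state) \<Rightarrow> real \<Rightarrow> (state \<times> real) set \<Rightarrow> state set" where
  "viab F us D = {x0 \<in> stateX. \<exists>u x. admissible_control us u \<and> is_solution F u x0 x \<and>
      (\<forall>t\<ge>0. (x t, u t) \<in> D)}"

definition FL :: "real \<Rightarrow> real \<Rightarrow> real \<Rightarrow> real \<Rightarrow> state \<Rightarrow> real" where
  "FL \<alpha>U \<nu> \<mu> k x = (case x of (LU, AU, LW, AW) \<Rightarrow>
     (if AU + AW = 0 then 0 else \<alpha>U * AU * (AU / (AU + AW))) - \<nu> * LU - \<mu> * (1 + k * (LU + LW)) * LU)"

definition FA :: "real \<Rightarrow> real \<Rightarrow> state \<Rightarrow> real" where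
  "FA \<nu> \<mu>U x = (case x of (LU, AU, LW, AW) \<Rightarrow> \<nu> * LU - \<mu>U * AU)"

definition GL :: "real \<Rightarrow> real \<Rightarrow> real \<Rightarrow> real \<Rightarrow> state \<Rightarrow> real" where
  "GL \<alpha>W \<nu> \<mu> k x = (case x of (LU, AU, LW, AW) \<Rightarrow>
     \<alpha>W * AW - \<nu> * LW - \<mu> * (1 + k * (LU + LW)) * LW)"

definition GA :: "real \<Rightarrow> real \<Rightarrow> state \<Rightarrow> real" where
  "GA \<nu> \<mu>W x = (case x of (LU, AU, LW, AW) \<Rightarrow> \<nu> * LW - \<mu>W * AW)"

definition fdyn :: "real \<Rightarrow> real \<Rightarrow> real \<Rightarrow> real \<Rightarrow> real \<Rightarrow> real \<Rightarrow> real \<Rightarrow> state \<Rightarrow> real \<Rightarrow> state" where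
  "fdyn \<alpha>U \<alpha>W \<nu> \<mu> k \<mu>U \<mu>W x u =
     (FL \<alpha>U \<nu> \<mu> k x, FA \<nu> \<mu>U x, GL \<alpha>W \<nu> \<mu> k x + u, GA \<nu> \<mu>W x)"

definition desirable :: "real \<Rightarrow> real \<Rightarrow> real \<Rightarrow> real \<Rightarrow> real \<Rightarrow> (state \<times> real) set" where
  "desirable us LUb AUb LWb AWb = {((LU, AU, LW, AW), u).
     (LU, AU, LW, AW) \<in> stateX \<and> 0 \<le> u \<and> u \<le> us \<and>
     LU \<le> LUb \<and> AU \<le> AUb \<and> LW \<ge> LWb \<and> AW \<ge> AWb}"

end

theory Submission
  imports Defs
begin

text \<open>
  Since the constant control \<open>u\<^sup>\<sharp>\<close> is admissible, only \<open>\<V>(f,\<D>) \<subseteq> \<V>(f\<^sup>\<sharp>,\<D>)\<close>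
  needs proof. The model is competitive between the two strains: the rate of each uninfected
  compartment increases with the other uninfected compartment and decreases with the infected ones,
  symmetrically for the infected compartments, and the rate of \<open>L\<^sub>W\<close> increases with the
  control. By the Kamke comparison principle, the solution \<open>y\<close> driven by the maximal control
  therefore stays below a viable trajectory \<open>x\<close> in the \<open>U\<close>-components and above it in the
  \<open>W\<close>-components, so \<open>y\<close> is viable as well.

  The delicate point is that \<open>y\<close> must exist for all times, while the field grows quadratically.
  The Lyapunov function \<open>L\<^sub>W + (2\<alpha>\<^sub>W/\<mu>\<^sub>W) A\<^sub>W\<close> bounds \<open>x\<close>; clamping the state
  into the box between \<open>x\<close> and this bound yields a bounded, globally Lipschitz field, whose
  global solution comes from Picard iteration in a Bielecki weighted norm. The comparison
  arguments then show that the clamp is never active, so this solution is \<open>y\<close>.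
\<close>

section \<open>Comparison principle for integral equations\<close>

lemma continuous_on_UNIV_if_continuous_on_intervals:
  fixes f :: "real \<Rightarrow> 'b::topological_space"
  assumes "\<And>n::nat. continuous_on {-real n..real n} f"
  shows "continuous_on UNIV f"
proof -
  have "UNIV = (\<Union>n::nat. {-real n<..<real n})"
  proof (intro set_eqI iffI UNIV_I)
    fix x :: real
    obtain n :: nat where "\<bar>x\<bar> < real n" using reals_Archimedean2 by blast
    then show "x \<in> (\<Union>n::nat. {-real n<..<real n})" by (intro UN_I[of n]) (auto simp: abs_less_iff)
  qed
  moreover have "continuous_on (\<Union>n::nat. {-real n<..<real n}) f"
  proof (rule continuous_on_open_UN)
    show "continuous_on {-real n<..<real n} f" for n
      using assms[of n] by (rule continuous_on_subset) auto
  qed simp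
  ultimately show ?thesis by simp
qed

lemma integral_solution_continuous:
  fixes x h :: "real \<Rightarrow> 'a::banach"
  assumes "\<And>t. t \<ge> 0 \<Longrightarrow> (h has_integral (x t - x 0)) {0..t}"
  shows "continuous_on UNIV (\<lambda>s. x (max 0 s))"
proof (rule continuous_on_UNIV_if_continuous_on_intervals)
  fix n :: nat
  have "h integrable_on {0..real n}" using assms[of "real n"] by auto
  then have "continuous_on {0..real n} (\<lambda>t. integral {0..t} h)"
    by (rule indefinite_integral_continuous_1)
  then have "continuous_on {0..real n} x"
  proof (rule continuous_on_eq[OF continuous_on_add[OF continuous_on_const]])
    show "x 0 + integral {0..t} h = x t" if "t \<in> {0..real n}" for t
      using assms[of t] that by (simp add: integral_unique)
  qed
  moreover have "continuous_on {-real n..real n} (\<lambda>s. max 0 s :: real)"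
    by (intro continuous_intros)
  ultimately show "continuous_on {-real n..real n} (\<lambda>s. x (max 0 s))"
    by (rule continuous_on_compose2[of "{0..real n}" x]) auto
qed

lemma last_zero_before:
  fixes \<phi> :: "real \<Rightarrow> real"
  assumes cont: "continuous_on {0..t} \<phi>" and "\<phi> 0 \<le> 0" "0 < \<phi> t" "0 \<le> t"
  obtains s0 where "0 \<le> s0" "s0 \<le> t" "\<phi> s0 = 0" "\<And>s. s0 < s \<Longrightarrow> s \<le> t \<Longrightarrow> 0 < \<phi> s"
proof -
  define S where "S = {0..t} \<inter> \<phi> -` {..0}"
  have "closed S" unfolding S_def
    by (rule continuous_closed_preimage) (auto intro: cont)
  moreover have "0 \<in> S" using assms by (auto simp: S_def)
  moreover have "bdd_above S" unfolding S_def by (rule bdd_aboveI[of _ t]) auto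
  ultimately have "Sup S \<in> S" using closed_contains_Sup by blast
  then have s0: "0 \<le> Sup S" "Sup S \<le> t" "\<phi> (Sup S) \<le> 0" by (auto simp: S_def)
  have above: "0 < \<phi> s" if "Sup S < s" "s \<le> t" for s
  proof (rule ccontr)
    assume "\<not> 0 < \<phi> s"
    then have "s \<in> S" using that s0 by (auto simp: S_def)
    then show False using cSup_upper[OF _ \<open>bdd_above S\<close>] that by fastforce
  qed
  have "continuous_on {Sup S..t} \<phi>"
    using cont by (rule continuous_on_subset) (use s0 in auto)
  then obtain s1 where s1: "Sup S \<le> s1" "s1 \<le> t" "\<phi> s1 = 0"
    using IVT'[of \<phi> "Sup S" 0 t] s0 assms(3) by auto
  then have "s1 = Sup S" using above[of s1] by fastforce
  with s0 s1 above show ?thesis by (intro that) auto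
qed

lemma integral_barrier:
  fixes \<phi> h :: "real \<Rightarrow> real"
  assumes int: "\<And>t. t \<ge> 0 \<Longrightarrow> (h has_integral (\<phi> t - \<phi> 0)) {0..t}"
    and init: "\<phi> 0 \<le> 0"
    and barrier: "\<And>s. s \<ge> 0 \<Longrightarrow> \<phi> s \<ge> 0 \<Longrightarrow> h s \<le> 0"
    and t: "t \<ge> 0"
  shows "\<phi> t \<le> 0"
proof (rule ccontr)
  assume "\<not> \<phi> t \<le> 0"
  have "continuous_on {0..t} (\<lambda>s. \<phi> (max 0 s))"
    using integral_solution_continuous[OF int] by (rule continuous_on_subset[OF _ subset_UNIV])
  then have "continuous_on {0..t} \<phi>"
    by (rule continuous_on_cong[THEN iffD1, rotated 2]) auto
  then obtain s0 where s0: "0 \<le> s0" "s0 \<le> t" "\<phi> s0 = 0"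
    and above: "\<And>s. s0 < s \<Longrightarrow> s \<le> t \<Longrightarrow> 0 < \<phi> s"
    using last_zero_before init \<open>\<not> \<phi> t \<le> 0\<close> t by (metis not_le)
  have "h integrable_on {0..t}" using int[OF t] by blast
  then have "integral {0..s0} h + integral {s0..t} h = integral {0..t} h"
    using s0 by (intro Henstock_Kurzweil_Integration.integral_combine) auto
  then have "integral {s0..t} h = \<phi> t"
    using int[OF t] int[OF s0(1)] s0(3) by (simp add: integral_unique)
  moreover have "integral {s0..t} h \<le> integral {s0..t} (\<lambda>_. 0::real)"
  proof (rule integral_le)
    show "h integrable_on {s0..t}"
      using integrable_subinterval_real[OF \<open>h integrable_on {0..t}\<close>] s0 by auto
    show "h s \<le> 0" if "s \<in> {s0..t}" for s
      using barrier[of s] above[of s] that s0 by (cases "s = s0") auto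
  qed (rule integrable_0)
  ultimately show False using \<open>\<not> \<phi> t \<le> 0\<close> by simp
qed

lemma integral_comparison:
  fixes a b ha hb :: "real \<Rightarrow> real"
  assumes "\<And>t. t \<ge> 0 \<Longrightarrow> (ha has_integral (a t - a 0)) {0..t}"
    and "\<And>t. t \<ge> 0 \<Longrightarrow> (hb has_integral (b t - b 0)) {0..t}"
    and "a 0 \<le> b 0"
    and "\<And>s. s \<ge> 0 \<Longrightarrow> a s \<ge> b s \<Longrightarrow> ha s \<le> hb s"
    and "t \<ge> 0"
  shows "a t \<le> b t"
proof -
  have "(\<lambda>t. a t - b t) t \<le> 0"
  proof (rule integral_barrier[where \<phi> = "\<lambda>t. a t - b t" and h = "\<lambda>s. ha s - hb s"])
    show "((\<lambda>s. ha s - hb s) has_integral (a t - b t) - (a 0 - b 0)) {0..t}" if "t \<ge> 0" for t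
      using has_integral_diff[OF assms(1,2)[OF that]] by (simp add: algebra_simps)
  qed (use assms in auto)
  then show ?thesis by simp
qed

lemma integral_upper_barrier:
  fixes a h :: "real \<Rightarrow> real"
  assumes "\<And>t. t \<ge> 0 \<Longrightarrow> (h has_integral (a t - a 0)) {0..t}"
    and "a 0 \<le> c"
    and "\<And>s. s \<ge> 0 \<Longrightarrow> a s \<ge> c \<Longrightarrow> h s \<le> 0"
    and "t \<ge> 0"
  shows "a t \<le> c"
  using integral_comparison[of h a "\<lambda>_. 0" "\<lambda>_. c"] assms by simp

lemma integral_lower_barrier:
  fixes a h :: "real \<Rightarrow> real"
  assumes "\<And>t. t \<ge> 0 \<Longrightarrow> (h has_integral (a t - a 0)) {0..t}"
    and "c \<le> a 0"
    and "\<And>s. s \<ge> 0 \<Longrightarrow> a s \<le> c \<Longrightarrow> 0 \<le> h s"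
    and "t \<ge> 0"
  shows "c \<le> a t"
  using integral_comparison[of "\<lambda>_. 0" "\<lambda>_. c" h a] assms by simp

lemma has_integral_fst:
  "(f has_integral i) S \<Longrightarrow> ((\<lambda>s. fst (f s)) has_integral fst i) S"
  using has_integral_linear[OF _ bounded_linear_fst] by (simp add: o_def)

lemma has_integral_snd:
  "(f has_integral i) S \<Longrightarrow> ((\<lambda>s. snd (f s)) has_integral snd i) S"
  using has_integral_linear[OF _ bounded_linear_snd] by (simp add: o_def)

lemma has_integral_exp_linear:
  fixes c T :: real
  assumes "c \<noteq> 0" "T \<ge> 0"
  shows "((\<lambda>s. exp (c * s)) has_integral (exp (c * T) - 1) / c) {0..T}"
proof -
  have "((\<lambda>s. exp (c * s)) has_integral (exp (c * T) / c - exp (c * 0) / c)) {0..T}"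
  proof (rule fundamental_theorem_of_calculus[OF assms(2)])
    fix s :: real
    have "((\<lambda>s. exp (c * s) / c) has_real_derivative exp (c * s)) (at s)"
      using assms(1) by (auto intro!: derivative_eq_intros)
    then show "((\<lambda>s. exp (c * s) / c) has_vector_derivative exp (c * s)) (at s within {0..T})"
      by (simp add: has_real_derivative_iff_has_vector_derivative has_vector_derivative_at_within)
  qed
  then show ?thesis by (simp add: diff_divide_distrib)
qed

lemma mult_exp_neg_le:
  fixes c T :: real
  assumes "c > 0" "T \<ge> 0"
  shows "T * exp (- (c * T)) \<le> 1 / c"
proof -
  have "c * T \<le> exp (c * T)" using exp_ge_add_one_self[of "c * T"] by linarith
  then have "c * T * exp (- (c * T)) \<le> 1" by (simp add: exp_minus field_simps)
  then show ?thesis using assms(1) by (simp add: field_simps)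
qed

section \<open>Global solutions of bounded Lipschitz equations\<close>

locale bounded_lipschitz_field =
  fixes G :: "real \<Rightarrow> 'a::banach \<Rightarrow> 'a" and B L :: real
  assumes continuous_along: "\<And>y. continuous_on UNIV y \<Longrightarrow> continuous_on UNIV (\<lambda>s. G s (y s))"
    and norm_bounded: "\<And>s w. norm (G s w) \<le> B"
    and lipschitz: "\<And>s w w'. norm (G s w - G s w') \<le> L * norm (w - w')"
    and L_pos: "L > 0"
begin

text \<open>
  The Picard operator acts on \<open>z(t) = e\<^sup>-\<^sup>2\<^sup>L\<^sup>t y(t)\<close>; in this Bielecki weighted sup norm
  it is a \<open>1/2\<close>-contraction on all of \<open>[0,\<infinity>)\<close>. Negative times are frozen at \<open>0\<close> so that
  everything lives in the complete space of bounded continuous functions on \<open>\<real>\<close>.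
\<close>

definition unweighted :: "(real \<Rightarrow>\<^sub>C 'a) \<Rightarrow> real \<Rightarrow> 'a" where
  "unweighted z s = exp (2 * L * max 0 s) *\<^sub>R apply_bcontfun z s"

definition picard_integral :: "(real \<Rightarrow>\<^sub>C 'a) \<Rightarrow> real \<Rightarrow> 'a" where
  "picard_integral z t = integral {0..max 0 t} (\<lambda>s. G s (unweighted z s))"

definition picard :: "'a \<Rightarrow> (real \<Rightarrow>\<^sub>C 'a) \<Rightarrow> real \<Rightarrow>\<^sub>C 'a" where
  "picard x0 z = Bcontfun (\<lambda>t. exp (- (2 * L * max 0 t)) *\<^sub>R (x0 + picard_integral z t))"

lemma integrable_along_unweighted: "(\<lambda>s. G s (unweighted z s)) integrable_on {a..b}"
proof (rule integrable_continuous_interval)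
  have "continuous_on UNIV (unweighted z)"
    unfolding unweighted_def by (intro continuous_intros continuous_on_apply_bcontfun)
  then show "continuous_on {a..b} (\<lambda>s. G s (unweighted z s))"
    by (rule continuous_on_subset[OF continuous_along subset_UNIV])
qed

lemma picard_integral_norm_le: "norm (picard_integral z t) \<le> B * max 0 t"
proof -
  have "norm (picard_integral z t) \<le> integral {0..max 0 t} (\<lambda>s. B)"
    unfolding picard_integral_def
    by (rule integral_norm_bound_integral[OF integrable_along_unweighted]) (auto intro: norm_bounded)
  then show ?thesis by (simp add: mult.commute)
qed

lemma apply_picard:
  "apply_bcontfun (picard x0 z) = (\<lambda>t. exp (- (2 * L * max 0 t)) *\<^sub>R (x0 + picard_integral z t))"
  unfolding picard_def
proof (rule Bcontfun_inverse, rule bcontfun_normI)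
  have "continuous_on UNIV (\<lambda>t. picard_integral z (max 0 t))"
    unfolding picard_integral_def
    by (rule integral_solution_continuous[where h = "\<lambda>s. G s (unweighted z s)"])
      (simp add: integrable_integral integrable_along_unweighted)
  then show "continuous_on UNIV (\<lambda>t. exp (- (2 * L * max 0 t)) *\<^sub>R (x0 + picard_integral z t))"
    by (simp add: picard_integral_def) (intro continuous_intros)
  fix t :: real
  define T where "T = max 0 t"
  have "T \<ge> 0" by (simp add: T_def)
  have "norm (exp (- (2 * L * T)) *\<^sub>R (x0 + picard_integral z t))
      \<le> exp (- (2 * L * T)) * (norm x0 + B * T)"
    using norm_triangle_ineq[of x0 "picard_integral z t"] picard_integral_norm_le[of z t]
    by (auto simp: T_def intro!: mult_left_mono)
  also have "\<dots> = exp (- (2 * L * T)) * norm x0 + B * (T * exp (- (2 * L * T)))"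
    by (simp add: algebra_simps)
  also have "\<dots> \<le> norm x0 + B * (1 / (2 * L))"
  proof (intro add_mono mult_left_mono)
    show "exp (- (2 * L * T)) * norm x0 \<le> norm x0"
      using L_pos \<open>T \<ge> 0\<close> by (intro mult_left_le_one_le) auto
    show "T * exp (- (2 * L * T)) \<le> 1 / (2 * L)"
      using L_pos \<open>T \<ge> 0\<close> by (intro mult_exp_neg_le) auto
    show "0 \<le> B" using norm_bounded[of 0 0] norm_ge_zero order_trans by blast
  qed
  finally show "norm (exp (- (2 * L * max 0 t)) *\<^sub>R (x0 + picard_integral z t))
      \<le> norm x0 + B * (1 / (2 * L))" by (simp add: T_def)
qed

lemma picard_contraction: "dist (picard x0 z1) (picard x0 z2) \<le> 1 / 2 * dist z1 z2"
proof (rule dist_bound)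
  fix t :: real
  define d where "d = dist z1 z2"
  define T where "T = max 0 t"
  have "T \<ge> 0" "0 \<le> d" by (simp_all add: T_def d_def)
  have weighted_bound: "((\<lambda>s. L * d * exp (2 * L * s)) has_integral d / 2 * (exp (2 * L * T) - 1)) {0..T}"
    using has_integral_mult_right[OF has_integral_exp_linear[of "2 * L" T], of "L * d"] L_pos \<open>T \<ge> 0\<close>
    by simp
  have "picard_integral z1 t - picard_integral z2 t
      = integral {0..T} (\<lambda>s. G s (unweighted z1 s) - G s (unweighted z2 s))"
    unfolding picard_integral_def T_def
    by (rule integral_diff[symmetric, OF integrable_along_unweighted integrable_along_unweighted])
  also have "norm \<dots> \<le> integral {0..T} (\<lambda>s. L * d * exp (2 * L * s))"
  proof (rule integral_norm_bound_integral)
    show "(\<lambda>s. G s (unweighted z1 s) - G s (unweighted z2 s)) integrable_on {0..T}"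
      by (intro integrable_diff integrable_along_unweighted)
    show "(\<lambda>s. L * d * exp (2 * L * s)) integrable_on {0..T}"
      using weighted_bound by blast
    fix s assume "s \<in> {0..T}"
    then have "unweighted z1 s - unweighted z2 s = exp (2 * L * s) *\<^sub>R (z1 s - z2 s)"
      by (simp add: unweighted_def scaleR_diff_right)
    moreover have "dist (z1 s) (z2 s) \<le> d" unfolding d_def by (rule dist_bounded)
    ultimately have "L * norm (unweighted z1 s - unweighted z2 s) \<le> L * (exp (2 * L * s) * d)"
      using L_pos by (auto simp: dist_norm intro!: mult_left_mono)
    then show "norm (G s (unweighted z1 s) - G s (unweighted z2 s)) \<le> L * d * exp (2 * L * s)"
      using lipschitz[of s "unweighted z1 s" "unweighted z2 s"] by (simp add: algebra_simps)
  qed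
  also have "\<dots> = d / 2 * (exp (2 * L * T) - 1)"
    using weighted_bound by (rule integral_unique)
  finally have integral_diff_le:
    "norm (picard_integral z1 t - picard_integral z2 t) \<le> d / 2 * (exp (2 * L * T) - 1)" .
  have "dist (picard x0 z1 t) (picard x0 z2 t)
      = exp (- (2 * L * T)) * norm (picard_integral z1 t - picard_integral z2 t)"
    by (simp add: apply_picard dist_norm T_def scaleR_diff_right[symmetric])
  also have "\<dots> \<le> exp (- (2 * L * T)) * (d / 2 * (exp (2 * L * T) - 1))"
    using integral_diff_le by (rule mult_left_mono) simp
  also have "\<dots> = d / 2 * (1 - exp (- (2 * L * T)))"
    by (simp add: exp_minus field_simps)
  also have "\<dots> \<le> d / 2"
    using \<open>0 \<le> d\<close> by (simp add: mult_left_le)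
  finally show "dist (picard x0 z1 t) (picard x0 z2 t) \<le> 1 / 2 * dist z1 z2"
    by (simp add: d_def)
qed

theorem exists_integral_solution:
  "\<exists>y. \<forall>t\<ge>0. ((\<lambda>s. G s (y s)) has_integral (y t - x0)) {0..t}"
proof -
  obtain z where fixed: "picard x0 z = z"
    using banach_fix_type[of "1 / 2" "picard x0"] picard_contraction by auto
  have "((\<lambda>s. G s (unweighted z s)) has_integral (unweighted z t - x0)) {0..t}" if "t \<ge> 0" for t
  proof -
    have "apply_bcontfun z t = apply_bcontfun (picard x0 z) t" by (simp add: fixed)
    also have "\<dots> = exp (- (2 * L * t)) *\<^sub>R (x0 + picard_integral z t)"
      using that by (simp add: apply_picard)
    finally have "apply_bcontfun z t = exp (- (2 * L * t)) *\<^sub>R (x0 + picard_integral z t)" .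
    then have "unweighted z t - x0 = integral {0..t} (\<lambda>s. G s (unweighted z s))"
      using that by (simp add: unweighted_def picard_integral_def exp_minus)
    then show ?thesis
      using integrable_along_unweighted[of z 0 t] by (simp add: has_integral_integral)
  qed
  then show ?thesis by blast
qed

end

definition clip :: "real \<Rightarrow> real \<Rightarrow> real \<Rightarrow> real" where
  "clip a b v = min b (max a v)"

lemma clip_le_upper: "clip a b v \<le> b"
  by (simp add: clip_def)

lemma clip_ge_lower: "a \<le> b \<Longrightarrow> a \<le> clip a b v"
  by (simp add: clip_def)

lemma clip_eq_self: "a \<le> v \<Longrightarrow> v \<le> b \<Longrightarrow> clip a b v = v"
  by (simp add: clip_def)

lemma clip_eq_lower: "v \<le> a \<Longrightarrow> a \<le> b \<Longrightarrow> clip a b v = a"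
  by (simp add: clip_def)

lemma clip_eq_upper: "b \<le> v \<Longrightarrow> a \<le> b \<Longrightarrow> clip a b v = b"
  by (simp add: clip_def)

lemma abs_clip_diff_le: "a \<le> b \<Longrightarrow> \<bar>clip a b v - clip a b v'\<bar> \<le> \<bar>v - v'\<bar>"
  by (auto simp: clip_def min_def max_def abs_if)

lemma continuous_on_clip [continuous_intros]:
  "continuous_on S a \<Longrightarrow> continuous_on S b \<Longrightarrow> continuous_on S v \<Longrightarrow>
    continuous_on S (\<lambda>s. clip (a s) (b s) (v s))"
  unfolding clip_def by (intro continuous_intros)

lemma norm_quadruple_le:
  fixes a b c d :: real
  shows "norm (a, b, c, d) \<le> \<bar>a\<bar> + \<bar>b\<bar> + \<bar>c\<bar> + \<bar>d\<bar>"
  using norm_Pair_le[of a "(b, c, d)"] norm_Pair_le[of b "(c, d)"] norm_Pair_le[of c d] by simp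

lemma abs_components_le_norm:
  fixes w :: "real \<times> real \<times> real \<times> real"
  shows "\<bar>fst w\<bar> \<le> norm w" "\<bar>fst (snd w)\<bar> \<le> norm w"
    "\<bar>fst (snd (snd w))\<bar> \<le> norm w" "\<bar>snd (snd (snd w))\<bar> \<le> norm w"
proof -
  obtain a b c d where w: "w = (a, b, c, d)" by (cases w) auto
  show "\<bar>fst w\<bar> \<le> norm w" "\<bar>fst (snd w)\<bar> \<le> norm w"
    "\<bar>fst (snd (snd w))\<bar> \<le> norm w" "\<bar>snd (snd (snd w))\<bar> \<le> norm w"
    using norm_fst_le[of a "(b, c, d)"] norm_snd_le[of "(b, c, d)" a]
      norm_fst_le[of b "(c, d)"] norm_snd_le[of "(c, d)" b] norm_fst_le[of c d] norm_snd_le[of d c]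
    by (simp_all add: w)
qed

lemma abs_mult_diff_le:
  fixes a b a' b' :: real
  shows "\<bar>a * b - a' * b'\<bar> \<le> \<bar>a\<bar> * \<bar>b - b'\<bar> + \<bar>b'\<bar> * \<bar>a - a'\<bar>"
proof -
  have "a * b - a' * b' = a * (b - b') + b' * (a - a')" by (simp add: algebra_simps)
  then show ?thesis by (metis abs_mult abs_triangle_ineq)
qed

lemma recruitment_mono:
  fixes a a' w w' :: real
  assumes "0 \<le> a" "a \<le> a'" "0 < w'" "w' \<le> w"
  shows "a * (a / (a + w)) \<le> a' * (a' / (a' + w'))"
proof -
  have "a * w' \<le> a' * w" using assms by (intro mult_mono) auto
  then have "a / (a + w) \<le> a' / (a' + w')"
    using assms by (simp add: divide_le_eq le_divide_eq algebra_simps)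
  moreover have "0 \<le> a / (a + w)" using assms by simp
  ultimately show ?thesis using assms by (intro mult_mono) auto
qed

lemma recruitment_lipschitz:
  fixes a a' w w' :: real
  assumes "0 \<le> a" "0 \<le> a'" "0 < w" "0 < w'"
  shows "\<bar>a * (a / (a + w)) - a' * (a' / (a' + w'))\<bar> \<le> \<bar>a - a'\<bar> + \<bar>w - w'\<bar>"
proof -
  define P where "P = a * a' + a * w' + a' * w"
  define D where "D = (a + w) * (a' + w')"
  have "0 < D" using assms by (simp add: D_def)
  have P: "0 \<le> P" "P \<le> D" and Q: "0 \<le> a * a'" "a * a' \<le> D"
    using assms by (auto simp: P_def D_def algebra_simps)
  have "a * (a / (a + w)) - a' * (a' / (a' + w')) = ((a - a') * P + (w' - w) * (a * a')) / D"
    using assms by (simp add: P_def D_def field_simps)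
  moreover have "\<bar>(a - a') * P + (w' - w) * (a * a')\<bar> \<le> \<bar>a - a'\<bar> * D + \<bar>w - w'\<bar> * D"
  proof -
    have "\<bar>(a - a') * P\<bar> \<le> \<bar>a - a'\<bar> * D" using P by (simp add: abs_mult mult_left_mono)
    moreover have "\<bar>(w' - w) * (a * a')\<bar> \<le> \<bar>w - w'\<bar> * D"
      using Q by (simp add: abs_mult abs_minus_commute mult_left_mono)
    ultimately show ?thesis by (smt (verit) abs_triangle_ineq)
  qed
  ultimately show ?thesis
    using \<open>0 < D\<close> by (simp add: abs_divide divide_le_eq algebra_simps)
qed

lemma abs_diff2_le:
  fixes p q X Y BX BY :: real
  assumes "0 \<le> p" "0 \<le> q" "\<bar>X\<bar> \<le> BX" "\<bar>Y\<bar> \<le> BY"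
  shows "\<bar>p * X - q * Y\<bar> \<le> p * BX + q * BY"
proof -
  have "\<bar>p * X\<bar> \<le> p * BX" "\<bar>q * Y\<bar> \<le> q * BY"
    using assms by (simp_all add: abs_mult mult_left_mono)
  then show ?thesis by linarith
qed

lemma abs_diff3_le:
  fixes p q r X Y Z BX BY BZ :: real
  assumes "0 \<le> p" "0 \<le> q" "0 \<le> r" "\<bar>X\<bar> \<le> BX" "\<bar>Y\<bar> \<le> BY" "\<bar>Z\<bar> \<le> BZ"
  shows "\<bar>p * X - q * Y - r * Z\<bar> \<le> p * BX + q * BY + r * BZ"
proof -
  have "\<bar>p * X\<bar> \<le> p * BX" "\<bar>q * Y\<bar> \<le> q * BY" "\<bar>r * Z\<bar> \<le> r * BZ"
    using assms by (simp_all add: abs_mult mult_left_mono)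
  then show ?thesis by linarith
qed

locale wolbachia_model =
  fixes \<alpha>U \<alpha>W \<nu> \<mu> k \<mu>U \<mu>W us :: real
  assumes pos: "\<alpha>U > 0" "\<alpha>W > 0" "\<nu> > 0" "\<mu> > 0" "k > 0" "\<mu>U > 0" "\<mu>W > 0" "us > 0"
begin

definition field :: "real \<Rightarrow> state \<Rightarrow> state" where
  "field v = (\<lambda>(LU, AU, LW, AW).
     (\<alpha>U * (AU * (AU / (AU + AW))) - \<nu> * LU - \<mu> * (1 + k * (LU + LW)) * LU,
      \<nu> * LU - \<mu>U * AU,
      \<alpha>W * AW - \<nu> * LW - \<mu> * (1 + k * (LU + LW)) * LW + v,
      \<nu> * LW - \<mu>W * AW))"

lemma fdyn_eq_field:
  "AU + AW \<noteq> 0 \<Longrightarrow> fdyn \<alpha>U \<alpha>W \<nu> \<mu> k \<mu>U \<mu>W (LU, AU, LW, AW) v = field v (LU, AU, LW, AW)"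
  by (simp add: fdyn_def FL_def FA_def GL_def GA_def field_def mult.assoc)

text \<open>
  Kamke's condition for the order that increases the \<open>U\<close>-components and decreases the
  \<open>W\<close>-components: each rate is monotone in the other components when its own component agrees.
\<close>

lemma field_quasimonotone:
  assumes "0 \<le> a" "a \<le> a'" "0 \<le> b" "b \<le> b'" "c' \<le> c" "0 \<le> c'" "0 < d'" "d' \<le> d"
  shows "a = a' \<Longrightarrow> fst (field v (a, b, c, d)) \<le> fst (field v' (a', b', c', d'))"
    and "b = b' \<Longrightarrow> fst (snd (field v (a, b, c, d))) \<le> fst (snd (field v' (a', b', c', d')))"
    and "c = c' \<Longrightarrow> v' \<le> v \<Longrightarrow>
      fst (snd (snd (field v' (a', b', c', d')))) \<le> fst (snd (snd (field v (a, b, c, d))))"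
    and "d = d' \<Longrightarrow> snd (snd (snd (field v' (a', b', c', d')))) \<le> snd (snd (snd (field v (a, b, c, d))))"
proof -
  have "\<alpha>U * (b * (b / (b + d))) \<le> \<alpha>U * (b' * (b' / (b' + d')))"
    using recruitment_mono[of b b' d' d] assms pos by (intro mult_left_mono) auto
  moreover have "\<mu> * (1 + k * (a + c')) * a \<le> \<mu> * (1 + k * (a + c)) * a"
    using assms pos by (intro mult_right_mono mult_left_mono) auto
  ultimately show "a = a' \<Longrightarrow> fst (field v (a, b, c, d)) \<le> fst (field v' (a', b', c', d'))"
    by (simp add: field_def)
  show "b = b' \<Longrightarrow> fst (snd (field v (a, b, c, d))) \<le> fst (snd (field v' (a', b', c', d')))"
    using assms pos by (simp add: field_def)
  show "fst (snd (snd (field v' (a', b', c', d')))) \<le> fst (snd (snd (field v (a, b, c, d))))"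
    if "c = c'" "v' \<le> v"
  proof -
    have "\<mu> * (1 + k * (a + c)) * c \<le> \<mu> * (1 + k * (a' + c)) * c"
      using assms pos that by (intro mult_right_mono mult_left_mono) auto
    moreover have "\<alpha>W * d' \<le> \<alpha>W * d" using assms pos by simp
    ultimately show ?thesis using that by (simp add: field_def)
  qed
  show "d = d' \<Longrightarrow> snd (snd (snd (field v' (a', b', c', d')))) \<le> snd (snd (snd (field v (a, b, c, d))))"
    using assms pos by (simp add: field_def)
qed

definition field_lipschitz_constant :: "real \<Rightarrow> real" where
  "field_lipschitz_constant R = 2 * \<alpha>U + \<alpha>W + 4 * \<nu> + 2 * \<mu> + \<mu>U + \<mu>W + 8 * \<mu> * k * R"

lemma field_lipschitz:
  assumes "0 \<le> a" "a \<le> R" "0 \<le> b" "0 \<le> c" "c \<le> R" "0 < d"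
    and "0 \<le> a'" "a' \<le> R" "0 \<le> b'" "0 \<le> c'" "c' \<le> R" "0 < d'"
    and close: "\<bar>a - a'\<bar> \<le> N" "\<bar>b - b'\<bar> \<le> N" "\<bar>c - c'\<bar> \<le> N" "\<bar>d - d'\<bar> \<le> N"
  shows "norm (field v (a, b, c, d) - field v (a', b', c', d')) \<le> field_lipschitz_constant R * N"
proof -
  have recruitment: "\<bar>b * (b / (b + d)) - b' * (b' / (b' + d'))\<bar> \<le> 2 * N"
    using recruitment_lipschitz[of b b' d d'] assms by linarith
  have crowding: "\<bar>(a + c) * e - (a' + c') * e'\<bar> \<le> 4 * R * N"
    if "e' \<le> R" "0 \<le> e'" "\<bar>e - e'\<bar> \<le> N" for e e'
  proof -
    have "\<bar>a + c\<bar> * \<bar>e - e'\<bar> \<le> (2 * R) * N"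
      using assms that by (intro mult_mono) auto
    moreover have "\<bar>e'\<bar> * \<bar>(a + c) - (a' + c')\<bar> \<le> R * (2 * N)"
      using assms that by (intro mult_mono) auto
    ultimately show ?thesis using abs_mult_diff_le[of "a + c" e "a' + c'" e'] by linarith
  qed
  have "field v (a, b, c, d) - field v (a', b', c', d') =
     (\<alpha>U * (b * (b / (b + d)) - b' * (b' / (b' + d'))) - (\<nu> + \<mu>) * (a - a')
        - \<mu> * k * ((a + c) * a - (a' + c') * a'),
      \<nu> * (a - a') - \<mu>U * (b - b'),
      \<alpha>W * (d - d') - (\<nu> + \<mu>) * (c - c') - \<mu> * k * ((a + c) * c - (a' + c') * c'),
      \<nu> * (c - c') - \<mu>W * (d - d'))"
    by (simp add: field_def algebra_simps)
  then have "norm (field v (a, b, c, d) - field v (a', b', c', d'))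
      \<le> \<bar>\<alpha>U * (b * (b / (b + d)) - b' * (b' / (b' + d'))) - (\<nu> + \<mu>) * (a - a')
          - \<mu> * k * ((a + c) * a - (a' + c') * a')\<bar>
        + \<bar>\<nu> * (a - a') - \<mu>U * (b - b')\<bar>
        + \<bar>\<alpha>W * (d - d') - (\<nu> + \<mu>) * (c - c') - \<mu> * k * ((a + c) * c - (a' + c') * c')\<bar>
        + \<bar>\<nu> * (c - c') - \<mu>W * (d - d')\<bar>"
    by (simp only: norm_quadruple_le)
  also have "\<dots> \<le> (\<alpha>U * (2 * N) + (\<nu> + \<mu>) * N + \<mu> * k * (4 * R * N)) + (\<nu> * N + \<mu>U * N)
        + (\<alpha>W * N + (\<nu> + \<mu>) * N + \<mu> * k * (4 * R * N)) + (\<nu> * N + \<mu>W * N)"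
    using pos assms
    by (intro add_mono abs_diff3_le abs_diff2_le recruitment crowding) auto
  also have "\<dots> = field_lipschitz_constant R * N"
    by (simp add: field_lipschitz_constant_def algebra_simps)
  finally show ?thesis .
qed


text \<open>
  \<open>L\<^sub>W + lyapunov_weight * A\<^sub>W\<close> is a Lyapunov function for the \<open>W\<close>-compartments;
  the weight makes the \<open>A\<^sub>W\<close>-terms of its derivative add up to \<open>-\<alpha>\<^sub>W A\<^sub>W\<close>.
\<close>

definition lyapunov_weight :: real where
  "lyapunov_weight = 2 * \<alpha>W / \<mu>W"

definition LW_threshold :: real where
  "LW_threshold = (lyapunov_weight * \<nu> + us) / (\<mu> * k) + 1"

definition AW_threshold :: real where
  "AW_threshold = (lyapunov_weight * \<nu> * LW_threshold + us) / \<alpha>W"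

lemma lyapunov_weight_pos: "lyapunov_weight > 0"
  using pos by (simp add: lyapunov_weight_def)

lemma LW_threshold_ge_1: "1 \<le> LW_threshold"
  using pos lyapunov_weight_pos by (simp add: LW_threshold_def)

lemma lyapunov_rate_nonpos:
  assumes "0 \<le> l" "0 \<le> a" "0 \<le> b" "v \<le> us"
    and large: "LW_threshold + lyapunov_weight * AW_threshold \<le> a + lyapunov_weight * b"
  shows "\<alpha>W * b - \<nu> * a - \<mu> * (1 + k * (l + a)) * a + v + lyapunov_weight * (\<nu> * a - \<mu>W * b) \<le> 0"
proof -
  let ?c = lyapunov_weight
  have "?c * (\<nu> * a - \<mu>W * b) = ?c * \<nu> * a - 2 * \<alpha>W * b"
    using pos by (simp add: lyapunov_weight_def field_simps)
  moreover have "\<mu> * (1 + k * (l + a)) * a = \<mu> * a + \<mu> * k * l * a + \<mu> * k * a * a"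
    by (simp add: algebra_simps)
  moreover have "0 \<le> \<nu> * a" "0 \<le> \<mu> * a" "0 \<le> \<mu> * k * l * a" using pos assms by simp_all
  ultimately have "\<alpha>W * b - \<nu> * a - \<mu> * (1 + k * (l + a)) * a + v + ?c * (\<nu> * a - \<mu>W * b)
      \<le> ?c * \<nu> * a + us - \<alpha>W * b - \<mu> * k * a * a"
    using assms by linarith
  also have "\<dots> \<le> 0"
  proof (cases "LW_threshold \<le> a")
    case True
    have "\<mu> * k * LW_threshold = ?c * \<nu> + us + \<mu> * k"
      using pos by (simp add: LW_threshold_def field_simps)
    moreover have "\<mu> * k * LW_threshold * a \<le> \<mu> * k * a * a"
      using True pos \<open>0 \<le> a\<close> by (intro mult_right_mono) auto
    moreover have "us \<le> us * a"
      using True LW_threshold_ge_1 pos by simp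
    moreover have "0 \<le> \<alpha>W * b" "0 \<le> \<mu> * k * a"
      using pos assms by simp_all
    ultimately show ?thesis by (simp add: algebra_simps)
  next
    case False
    then have "AW_threshold < b"
      using large lyapunov_weight_pos by (smt (verit) mult_less_cancel_left_pos)
    then have "?c * \<nu> * LW_threshold + us < \<alpha>W * b"
      using pos by (simp add: AW_threshold_def field_simps)
    moreover have "?c * \<nu> * a \<le> ?c * \<nu> * LW_threshold"
      using False pos lyapunov_weight_pos by simp
    moreover have "0 \<le> \<mu> * k * a * a" using pos \<open>0 \<le> a\<close> by simp
    ultimately show ?thesis by linarith
  qed
  finally show ?thesis .
qed

text \<open>
  Below the Lyapunov level \<open>M\<close>, the box \<open>L\<^sub>W \<le> LW_ceiling M\<close>, \<open>A\<^sub>W \<le> AW_ceiling M\<close> is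
  forward invariant: on each upper face the corresponding rate is nonpositive.
\<close>

definition LW_ceiling :: "real \<Rightarrow> real" where
  "LW_ceiling M = max (max M 1) ((\<alpha>W * M / lyapunov_weight + us + \<alpha>W * \<nu> / \<mu>W) / (\<mu> * k))"

definition AW_ceiling :: "real \<Rightarrow> real" where
  "AW_ceiling M = max (M / lyapunov_weight) (\<nu> * LW_ceiling M / \<mu>W)"

lemma below_ceilings:
  assumes "0 \<le> LW" "0 \<le> AW" "LW + lyapunov_weight * AW \<le> M"
  shows "LW \<le> LW_ceiling M" "AW \<le> AW_ceiling M"
proof -
  have "0 \<le> lyapunov_weight * AW" using assms lyapunov_weight_pos by simp
  then show "LW \<le> LW_ceiling M" using assms by (auto simp: LW_ceiling_def)
  have "AW \<le> M / lyapunov_weight"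
    using assms lyapunov_weight_pos by (simp add: field_simps)
  then show "AW \<le> AW_ceiling M" by (simp add: AW_ceiling_def)
qed

lemma LW_rate_nonpos_at_ceiling:
  assumes "0 \<le> M" "0 \<le> l" "AW \<le> AW_ceiling M"
  shows "\<alpha>W * AW - \<nu> * LW_ceiling M - \<mu> * (1 + k * (l + LW_ceiling M)) * LW_ceiling M + us \<le> 0"
proof -
  define Lm where "Lm = LW_ceiling M"
  define K where "K = \<alpha>W * M / lyapunov_weight + us"
  have "1 \<le> Lm" and "(K + \<alpha>W * \<nu> / \<mu>W) / (\<mu> * k) \<le> Lm"
    by (simp_all add: Lm_def K_def LW_ceiling_def)
  then have "K + \<alpha>W * \<nu> / \<mu>W \<le> \<mu> * k * Lm"
    using pos by (simp add: field_simps)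
  then have "(K + \<alpha>W * \<nu> / \<mu>W) * Lm \<le> \<mu> * k * Lm * Lm"
    using \<open>1 \<le> Lm\<close> by (intro mult_right_mono) auto
  moreover have "K * 1 \<le> K * Lm"
    using \<open>1 \<le> Lm\<close> pos assms lyapunov_weight_pos by (intro mult_left_mono) (simp_all add: K_def)
  moreover have "\<alpha>W * AW \<le> \<alpha>W * M / lyapunov_weight + \<alpha>W * \<nu> / \<mu>W * Lm"
  proof -
    have "0 \<le> M / lyapunov_weight" "0 \<le> \<nu> * Lm / \<mu>W"
      using assms \<open>1 \<le> Lm\<close> pos lyapunov_weight_pos by simp_all
    then have "AW \<le> M / lyapunov_weight + \<nu> * Lm / \<mu>W"
      using assms(3) unfolding AW_ceiling_def Lm_def by linarith
    from mult_left_mono[OF this, of "\<alpha>W"] show ?thesis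
      using pos by (simp add: algebra_simps)
  qed
  moreover have "0 \<le> \<nu> * Lm" "0 \<le> \<mu> * Lm" "0 \<le> \<mu> * k * l * Lm"
    using pos assms \<open>1 \<le> Lm\<close> by simp_all
  ultimately show ?thesis
    unfolding Lm_def[symmetric] by (simp add: K_def algebra_simps)
qed

lemma AW_rate_nonpos_at_ceiling:
  assumes "LW \<le> LW_ceiling M"
  shows "\<nu> * LW - \<mu>W * AW_ceiling M \<le> 0"
proof -
  have "\<nu> * LW \<le> \<mu>W * (\<nu> * LW_ceiling M / \<mu>W)"
    using assms pos by simp
  also have "\<dots> \<le> \<mu>W * AW_ceiling M"
    using pos by (intro mult_left_mono) (auto simp: AW_ceiling_def)
  finally show ?thesis by simp
qed

end

section \<open>Viability under the maximal control\<close>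

text \<open>
  Of the thresholds only \<open>AWb > 0\<close> is needed: it keeps the recruitment quotient away
  from \<open>0/0\<close> along all trajectories that are compared with \<open>x\<close>.
\<close>

locale viable_trajectory = wolbachia_model +
  fixes LUb AUb LWb AWb :: real and x0 :: state and u :: "real \<Rightarrow> real" and x :: "real \<Rightarrow> state"
  assumes AWb_pos: "AWb > 0"
    and solution: "is_solution (fdyn \<alpha>U \<alpha>W \<nu> \<mu> k \<mu>U \<mu>W) u x0 x"
    and viable: "\<And>t. t \<ge> 0 \<Longrightarrow> (x t, u t) \<in> desirable us LUb AUb LWb AWb"
begin

definition x1 :: "real \<Rightarrow> real" where "x1 t = fst (x t)"
definition x2 :: "real \<Rightarrow> real" where "x2 t = fst (snd (x t))"
definition x3 :: "real \<Rightarrow> real" where "x3 t = fst (snd (snd (x t)))"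
definition x4 :: "real \<Rightarrow> real" where "x4 t = snd (snd (snd (x t)))"

lemma x_components: "x t = (x1 t, x2 t, x3 t, x4 t)"
  by (simp add: x1_def x2_def x3_def x4_def)

lemma viable_bounds:
  assumes "t \<ge> 0"
  shows "0 \<le> x1 t" "x1 t \<le> LUb" "0 \<le> x2 t" "x2 t \<le> AUb"
    "0 \<le> x3 t" "LWb \<le> x3 t" "AWb \<le> x4 t" "u t \<le> us"
  using viable[OF assms] by (auto simp: x_components[of t] desirable_def stateX_def)

lemma x_initial: "x 0 = x0"
  using solution by (simp add: is_solution_def)

lemma x_integral:
  assumes "t \<ge> 0"
  shows "((\<lambda>s. field (u s) (x s)) has_integral (x t - x 0)) {0..t}"
proof -
  have "((\<lambda>s. fdyn \<alpha>U \<alpha>W \<nu> \<mu> k \<mu>U \<mu>W (x s) (u s)) has_integral (x t - x 0)) {0..t}"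
    using solution assms by (simp add: is_solution_def)
  then show ?thesis
  proof (rule has_integral_eq[rotated])
    fix s assume "s \<in> {0..t}"
    then have "x2 s + x4 s \<noteq> 0" using viable_bounds[of s] AWb_pos by force
    then show "fdyn \<alpha>U \<alpha>W \<nu> \<mu> k \<mu>U \<mu>W (x s) (u s) = field (u s) (x s)"
      by (simp add: x_components fdyn_eq_field)
  qed
qed

lemma x_component_integrals:
  assumes "t \<ge> 0"
  shows "((\<lambda>s. fst (field (u s) (x s))) has_integral (x1 t - x1 0)) {0..t}"
    "((\<lambda>s. fst (snd (field (u s) (x s)))) has_integral (x2 t - x2 0)) {0..t}"
    "((\<lambda>s. fst (snd (snd (field (u s) (x s))))) has_integral (x3 t - x3 0)) {0..t}"
    "((\<lambda>s. snd (snd (snd (field (u s) (x s))))) has_integral (x4 t - x4 0)) {0..t}"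
  using has_integral_fst[OF x_integral[OF assms]]
    has_integral_fst[OF has_integral_snd[OF x_integral[OF assms]]]
    has_integral_fst[OF has_integral_snd[OF has_integral_snd[OF x_integral[OF assms]]]]
    has_integral_snd[OF has_integral_snd[OF has_integral_snd[OF x_integral[OF assms]]]]
  by (simp_all add: x1_def x2_def x3_def x4_def)

lemma x_continuous: "continuous_on UNIV (\<lambda>s. x (max 0 s))"
  using integral_solution_continuous[OF x_integral] .

definition lyapunov_bound :: real where
  "lyapunov_bound = max (x3 0 + lyapunov_weight * x4 0) (LW_threshold + lyapunov_weight * AW_threshold)"

lemma lyapunov_bound_nonneg: "0 \<le> lyapunov_bound"
  using viable_bounds[of 0] AWb_pos lyapunov_weight_pos
  by (auto simp: lyapunov_bound_def intro!: max.coboundedI1)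

lemma lyapunov_along_x:
  assumes "t \<ge> 0"
  shows "x3 t + lyapunov_weight * x4 t \<le> lyapunov_bound"
proof (rule integral_upper_barrier[OF _ _ _ assms])
  show "((\<lambda>s. fst (snd (snd (field (u s) (x s)))) + lyapunov_weight * snd (snd (snd (field (u s) (x s)))))
      has_integral (x3 t + lyapunov_weight * x4 t) - (x3 0 + lyapunov_weight * x4 0)) {0..t}"
    if "t \<ge> 0" for t
  proof -
    have "((\<lambda>s. fst (snd (snd (field (u s) (x s)))) + lyapunov_weight * snd (snd (snd (field (u s) (x s)))))
        has_integral (x3 t - x3 0) + lyapunov_weight * (x4 t - x4 0)) {0..t}"
      by (intro has_integral_add has_integral_mult_right x_component_integrals that)
    then show ?thesis by (simp add: algebra_simps)
  qed
  show "fst (snd (snd (field (u s) (x s)))) + lyapunov_weight * snd (snd (snd (field (u s) (x s)))) \<le> 0"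
    if "s \<ge> 0" "lyapunov_bound \<le> x3 s + lyapunov_weight * x4 s" for s
    using lyapunov_rate_nonpos[of "x1 s" "x3 s" "x4 s" "u s"] viable_bounds[OF that(1)] that(2) AWb_pos
    by (simp add: x_components field_def lyapunov_bound_def algebra_simps)
qed (simp add: lyapunov_bound_def)

definition LW_max :: real where "LW_max = LW_ceiling lyapunov_bound"
definition AW_max :: real where "AW_max = AW_ceiling lyapunov_bound"

lemma x_below_max:
  assumes "t \<ge> 0"
  shows "x3 t \<le> LW_max" "x4 t \<le> AW_max"
  using below_ceilings[OF _ _ lyapunov_along_x[OF assms]] viable_bounds[OF assms] AWb_pos
  by (simp_all add: LW_max_def AW_max_def)

lemma x_components_continuous:
  "continuous_on UNIV (\<lambda>s. x1 (max 0 s))" "continuous_on UNIV (\<lambda>s. x2 (max 0 s))"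
  "continuous_on UNIV (\<lambda>s. x3 (max 0 s))" "continuous_on UNIV (\<lambda>s. x4 (max 0 s))"
  unfolding x1_def x2_def x3_def x4_def by (intro continuous_intros x_continuous)+

text \<open>
  The clamp keeps the \<open>U\<close>-components below and the \<open>W\<close>-components above \<open>x\<close>, as the
  comparison lemmas of \<open>clamped_trajectory\<close> will show for the solution anyway, and caps the
  \<open>W\<close>-components at the Lyapunov ceilings so that the clamped field is bounded and Lipschitz.
\<close>

definition clamped :: "real \<Rightarrow> state \<Rightarrow> state" where
  "clamped s w =
    (clip 0 (x1 (max 0 s)) (fst w), clip 0 (x2 (max 0 s)) (fst (snd w)),
     clip (x3 (max 0 s)) LW_max (fst (snd (snd w))), clip (x4 (max 0 s)) AW_max (snd (snd (snd w))))"

definition clamped_field :: "real \<Rightarrow> state \<Rightarrow> state" where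
  "clamped_field s w = field us (clamped s w)"

definition clamp_radius :: real where
  "clamp_radius = max (max LUb AUb) (max LW_max AW_max)"

lemma clamped_in_box:
  "0 \<le> clip 0 (x1 (max 0 s)) v1" "clip 0 (x1 (max 0 s)) v1 \<le> clamp_radius"
  "0 \<le> clip 0 (x2 (max 0 s)) v2" "clip 0 (x2 (max 0 s)) v2 \<le> clamp_radius"
  "0 \<le> clip (x3 (max 0 s)) LW_max v3" "clip (x3 (max 0 s)) LW_max v3 \<le> clamp_radius"
  "AWb \<le> clip (x4 (max 0 s)) AW_max v4" "clip (x4 (max 0 s)) AW_max v4 \<le> clamp_radius"
proof -
  have r: "0 \<le> max 0 s" by simp
  note bounds = viable_bounds[OF r] x_below_max[OF r]
  have "LUb \<le> clamp_radius" "AUb \<le> clamp_radius" "LW_max \<le> clamp_radius" "AW_max \<le> clamp_radius"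
    by (simp_all add: clamp_radius_def)
  moreover have "clip 0 (x1 (max 0 s)) v1 \<le> x1 (max 0 s)" "clip 0 (x2 (max 0 s)) v2 \<le> x2 (max 0 s)"
    "clip (x3 (max 0 s)) LW_max v3 \<le> LW_max" "clip (x4 (max 0 s)) AW_max v4 \<le> AW_max"
    by (rule clip_le_upper)+
  moreover have "0 \<le> clip 0 (x1 (max 0 s)) v1" "0 \<le> clip 0 (x2 (max 0 s)) v2"
    "x3 (max 0 s) \<le> clip (x3 (max 0 s)) LW_max v3" "x4 (max 0 s) \<le> clip (x4 (max 0 s)) AW_max v4"
    using bounds by (intro clip_ge_lower; simp)+
  ultimately show
    "0 \<le> clip 0 (x1 (max 0 s)) v1" "clip 0 (x1 (max 0 s)) v1 \<le> clamp_radius"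
    "0 \<le> clip 0 (x2 (max 0 s)) v2" "clip 0 (x2 (max 0 s)) v2 \<le> clamp_radius"
    "0 \<le> clip (x3 (max 0 s)) LW_max v3" "clip (x3 (max 0 s)) LW_max v3 \<le> clamp_radius"
    "AWb \<le> clip (x4 (max 0 s)) AW_max v4" "clip (x4 (max 0 s)) AW_max v4 \<le> clamp_radius"
    using bounds by linarith+
qed

lemma clamp_radius_pos: "0 < clamp_radius"
  using clamped_in_box(7,8)[of 0 0] AWb_pos by linarith

lemma clamped_field_lipschitz:
  "norm (clamped_field s w - clamped_field s w') \<le> field_lipschitz_constant clamp_radius * norm (w - w')"
proof -
  have r: "0 \<le> max 0 s" by simp
  note bounds = viable_bounds[OF r] x_below_max[OF r]
  note close = abs_components_le_norm[of "w - w'", simplified]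
  show ?thesis
    unfolding clamped_field_def clamped_def
  proof (rule field_lipschitz)
    show "\<bar>clip 0 (x1 (max 0 s)) (fst w) - clip 0 (x1 (max 0 s)) (fst w')\<bar> \<le> norm (w - w')"
      by (rule order_trans[OF abs_clip_diff_le[OF bounds(1)] close(1)])
    show "\<bar>clip 0 (x2 (max 0 s)) (fst (snd w)) - clip 0 (x2 (max 0 s)) (fst (snd w'))\<bar> \<le> norm (w - w')"
      by (rule order_trans[OF abs_clip_diff_le[OF bounds(3)] close(2)])
    show "\<bar>clip (x3 (max 0 s)) LW_max (fst (snd (snd w))) - clip (x3 (max 0 s)) LW_max (fst (snd (snd w')))\<bar>
        \<le> norm (w - w')"
      by (rule order_trans[OF abs_clip_diff_le[OF bounds(9)] close(3)])
    show "\<bar>clip (x4 (max 0 s)) AW_max (snd (snd (snd w))) - clip (x4 (max 0 s)) AW_max (snd (snd (snd w')))\<bar>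
        \<le> norm (w - w')"
      using bounds(7,10) AWb_pos by (intro order_trans[OF abs_clip_diff_le close(4)]) auto
  qed (simp_all add: clamped_in_box less_le_trans[OF AWb_pos clamped_in_box(7)])
qed


lemma clamped_field_bounded:
  "norm (clamped_field s w) \<le> norm (field us (0, 0, 0, clamp_radius)) + field_lipschitz_constant clamp_radius * clamp_radius"
proof -
  have "norm (clamped_field s w - field us (0, 0, 0, clamp_radius)) \<le> field_lipschitz_constant clamp_radius * clamp_radius"
    unfolding clamped_field_def clamped_def
    using clamped_in_box[of s] clamp_radius_pos AWb_pos
    by (intro field_lipschitz)
      (simp_all add: abs_le_iff less_le_trans[OF AWb_pos clamped_in_box(7)]
        order_trans[OF less_imp_le[OF AWb_pos] clamped_in_box(7)])
  then show ?thesis using norm_triangle_sub[of "clamped_field s w" "field us (0, 0, 0, clamp_radius)"]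
    by linarith
qed

lemma clamped_field_continuous:
  assumes "continuous_on UNIV y"
  shows "continuous_on UNIV (\<lambda>s. clamped_field s (y s))"
proof -
  have "continuous_on UNIV (\<lambda>s. clip 0 (x1 (max 0 s)) (fst (y s)))"
    "continuous_on UNIV (\<lambda>s. clip 0 (x2 (max 0 s)) (fst (snd (y s))))"
    "continuous_on UNIV (\<lambda>s. clip (x3 (max 0 s)) LW_max (fst (snd (snd (y s)))))"
    "continuous_on UNIV (\<lambda>s. clip (x4 (max 0 s)) AW_max (snd (snd (snd (y s)))))"
    by (intro continuous_on_clip continuous_on_const continuous_on_fst continuous_on_snd
        x_components_continuous assms)+
  moreover have "\<forall>s\<in>UNIV. clip 0 (x2 (max 0 s)) (fst (snd (y s)))
      + clip (x4 (max 0 s)) AW_max (snd (snd (snd (y s)))) \<noteq> 0"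
  proof
    fix s
    have "0 \<le> clip 0 (x2 (max 0 s)) (fst (snd (y s)))"
      "AWb \<le> clip (x4 (max 0 s)) AW_max (snd (snd (snd (y s))))"
      by (rule clamped_in_box)+
    then show "clip 0 (x2 (max 0 s)) (fst (snd (y s)))
        + clip (x4 (max 0 s)) AW_max (snd (snd (snd (y s)))) \<noteq> 0"
      using AWb_pos by linarith
  qed
  ultimately show ?thesis
    unfolding clamped_field_def clamped_def field_def prod.case
    by (intro continuous_on_Pair continuous_on_diff continuous_on_add continuous_on_mult
        continuous_on_divide continuous_on_const) auto
qed

lemma clamped_solution_exists: "\<exists>y. \<forall>t\<ge>0. ((\<lambda>s. clamped_field s (y s)) has_integral (y t - x0)) {0..t}"
proof -
  interpret bounded_lipschitz_field clamped_field
    "norm (field us (0, 0, 0, clamp_radius)) + field_lipschitz_constant clamp_radius * clamp_radius"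
    "field_lipschitz_constant clamp_radius"
  proof
    show "0 < field_lipschitz_constant clamp_radius"
      using pos clamp_radius_pos by (simp add: field_lipschitz_constant_def add_pos_pos)
  qed (simp_all add: clamped_field_continuous clamped_field_bounded clamped_field_lipschitz)
  show ?thesis by (rule exists_integral_solution)
qed

end

locale clamped_trajectory = viable_trajectory +
  fixes y :: "real \<Rightarrow> state"
  assumes clamped_solution:
    "\<And>t. t \<ge> 0 \<Longrightarrow> ((\<lambda>s. clamped_field s (y s)) has_integral (y t - x0)) {0..t}"
begin

definition y1 :: "real \<Rightarrow> real" where "y1 t = fst (y t)"
definition y2 :: "real \<Rightarrow> real" where "y2 t = fst (snd (y t))"
definition y3 :: "real \<Rightarrow> real" where "y3 t = fst (snd (snd (y t)))"
definition y4 :: "real \<Rightarrow> real" where "y4 t = snd (snd (snd (y t)))"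

definition z1 :: "real \<Rightarrow> real" where "z1 s = clip 0 (x1 s) (y1 s)"
definition z2 :: "real \<Rightarrow> real" where "z2 s = clip 0 (x2 s) (y2 s)"
definition z3 :: "real \<Rightarrow> real" where "z3 s = clip (x3 s) LW_max (y3 s)"
definition z4 :: "real \<Rightarrow> real" where "z4 s = clip (x4 s) AW_max (y4 s)"

lemma y_components: "y t = (y1 t, y2 t, y3 t, y4 t)"
  by (simp add: y1_def y2_def y3_def y4_def)

lemma y_initial: "y 0 = x0"
proof -
  have "((\<lambda>s. clamped_field s (y s)) has_integral (y 0 - x0)) {0}"
    using clamped_solution[of 0] by simp
  then have "y 0 - x0 = 0" using has_integral_refl(2) has_integral_unique by blast
  then show ?thesis by simp
qed

lemma clamped_along_y: "s \<ge> 0 \<Longrightarrow> clamped s (y s) = (z1 s, z2 s, z3 s, z4 s)"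
  by (simp add: clamped_def z1_def z2_def z3_def z4_def y1_def y2_def y3_def y4_def)

lemma z_bounds:
  assumes "s \<ge> 0"
  shows "0 \<le> z1 s" "z1 s \<le> x1 s" "0 \<le> z2 s" "z2 s \<le> x2 s"
    "x3 s \<le> z3 s" "z3 s \<le> LW_max" "x4 s \<le> z4 s" "z4 s \<le> AW_max"
  using viable_bounds[OF assms] x_below_max[OF assms]
  by (simp_all add: z1_def z2_def z3_def z4_def clip_le_upper clip_ge_lower)

lemma y_component_integrals:
  assumes "t \<ge> 0"
  shows "((\<lambda>s. fst (field us (z1 s, z2 s, z3 s, z4 s))) has_integral (y1 t - y1 0)) {0..t}"
    "((\<lambda>s. fst (snd (field us (z1 s, z2 s, z3 s, z4 s)))) has_integral (y2 t - y2 0)) {0..t}"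
    "((\<lambda>s. fst (snd (snd (field us (z1 s, z2 s, z3 s, z4 s))))) has_integral (y3 t - y3 0)) {0..t}"
    "((\<lambda>s. snd (snd (snd (field us (z1 s, z2 s, z3 s, z4 s))))) has_integral (y4 t - y4 0)) {0..t}"
proof -
  have "((\<lambda>s. field us (z1 s, z2 s, z3 s, z4 s)) has_integral (y t - y 0)) {0..t}"
    using clamped_solution[OF assms] unfolding y_initial
    by (rule has_integral_eq[rotated]) (simp add: clamped_field_def clamped_along_y)
  note integral = this
  show "((\<lambda>s. fst (field us (z1 s, z2 s, z3 s, z4 s))) has_integral (y1 t - y1 0)) {0..t}"
    "((\<lambda>s. fst (snd (field us (z1 s, z2 s, z3 s, z4 s)))) has_integral (y2 t - y2 0)) {0..t}"
    "((\<lambda>s. fst (snd (snd (field us (z1 s, z2 s, z3 s, z4 s))))) has_integral (y3 t - y3 0)) {0..t}"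
    "((\<lambda>s. snd (snd (snd (field us (z1 s, z2 s, z3 s, z4 s))))) has_integral (y4 t - y4 0)) {0..t}"
    using has_integral_fst[OF integral] has_integral_fst[OF has_integral_snd[OF integral]]
      has_integral_fst[OF has_integral_snd[OF has_integral_snd[OF integral]]]
      has_integral_snd[OF has_integral_snd[OF has_integral_snd[OF integral]]]
    by (simp_all add: y1_def y2_def y3_def y4_def)
qed

lemma y_initial_components: "y1 0 = x1 0" "y2 0 = x2 0" "y3 0 = x3 0" "y4 0 = x4 0"
  by (simp_all add: y1_def y2_def y3_def y4_def x1_def x2_def x3_def x4_def y_initial x_initial)


lemma y1_le_x1: "t \<ge> 0 \<Longrightarrow> y1 t \<le> x1 t"
proof (rule integral_comparison[OF y_component_integrals(1) x_component_integrals(1)])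
  fix s assume s: "s \<ge> 0" "x1 s \<le> y1 s"
  have "z1 s = x1 s" unfolding z1_def by (rule clip_eq_upper[OF s(2) viable_bounds(1)[OF s(1)]])
  then have "fst (field us (z1 s, z2 s, z3 s, z4 s)) \<le> fst (field (u s) (x1 s, x2 s, x3 s, x4 s))"
    using z_bounds[OF s(1)] viable_bounds[OF s(1)] AWb_pos
    by (intro field_quasimonotone(1)) linarith+
  then show "fst (field us (z1 s, z2 s, z3 s, z4 s)) \<le> fst (field (u s) (x s))"
    by (simp only: x_components)
qed (simp_all add: y_initial_components)

lemma y1_nonneg: "t \<ge> 0 \<Longrightarrow> 0 \<le> y1 t"
proof (rule integral_lower_barrier[OF y_component_integrals(1)])
  fix s assume s: "s \<ge> 0" "y1 s \<le> 0"
  have "z1 s = 0" unfolding z1_def by (rule clip_eq_lower[OF s(2) viable_bounds(1)[OF s(1)]])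
  moreover have "0 \<le> \<alpha>U * (z2 s * (z2 s / (z2 s + z4 s)))"
    using z_bounds[OF s(1)] viable_bounds[OF s(1)] AWb_pos pos
    by (intro mult_nonneg_nonneg divide_nonneg_pos) auto
  ultimately show "0 \<le> fst (field us (z1 s, z2 s, z3 s, z4 s))"
    by (simp add: field_def)
qed (simp_all add: y_initial_components viable_bounds(1))

lemma y2_le_x2: "t \<ge> 0 \<Longrightarrow> y2 t \<le> x2 t"
proof (rule integral_comparison[OF y_component_integrals(2) x_component_integrals(2)])
  fix s assume s: "s \<ge> 0" "x2 s \<le> y2 s"
  have "z2 s = x2 s" unfolding z2_def by (rule clip_eq_upper[OF s(2) viable_bounds(3)[OF s(1)]])
  then have "fst (snd (field us (z1 s, z2 s, z3 s, z4 s)))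
      \<le> fst (snd (field (u s) (x1 s, x2 s, x3 s, x4 s)))"
    using z_bounds[OF s(1)] viable_bounds[OF s(1)] AWb_pos
    by (intro field_quasimonotone(2)) linarith+
  then show "fst (snd (field us (z1 s, z2 s, z3 s, z4 s))) \<le> fst (snd (field (u s) (x s)))"
    by (simp only: x_components)
qed (simp_all add: y_initial_components)

lemma y2_nonneg: "t \<ge> 0 \<Longrightarrow> 0 \<le> y2 t"
proof (rule integral_lower_barrier[OF y_component_integrals(2)])
  fix s assume s: "s \<ge> 0" "y2 s \<le> 0"
  have "z2 s = 0" unfolding z2_def by (rule clip_eq_lower[OF s(2) viable_bounds(3)[OF s(1)]])
  then show "0 \<le> fst (snd (field us (z1 s, z2 s, z3 s, z4 s)))"
    using z_bounds(1)[OF s(1)] pos by (simp add: field_def)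
qed (simp_all add: y_initial_components viable_bounds(3))

lemma x3_le_y3: "t \<ge> 0 \<Longrightarrow> x3 t \<le> y3 t"
proof (rule integral_comparison[OF x_component_integrals(3) y_component_integrals(3)])
  fix s assume s: "s \<ge> 0" "y3 s \<le> x3 s"
  have "z3 s = x3 s" unfolding z3_def by (rule clip_eq_lower[OF s(2) x_below_max(1)[OF s(1)]])
  then have "fst (snd (snd (field (u s) (x1 s, x2 s, x3 s, x4 s))))
      \<le> fst (snd (snd (field us (z1 s, z2 s, z3 s, z4 s))))"
    using z_bounds[OF s(1)] viable_bounds[OF s(1)] AWb_pos
    by (intro field_quasimonotone(3)) linarith+
  then show "fst (snd (snd (field (u s) (x s)))) \<le> fst (snd (snd (field us (z1 s, z2 s, z3 s, z4 s))))"
    by (simp only: x_components)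
qed (simp_all add: y_initial_components)

lemma x4_le_y4: "t \<ge> 0 \<Longrightarrow> x4 t \<le> y4 t"
proof (rule integral_comparison[OF x_component_integrals(4) y_component_integrals(4)])
  fix s assume s: "s \<ge> 0" "y4 s \<le> x4 s"
  have "z4 s = x4 s" unfolding z4_def by (rule clip_eq_lower[OF s(2) x_below_max(2)[OF s(1)]])
  then have "snd (snd (snd (field (u s) (x1 s, x2 s, x3 s, x4 s))))
      \<le> snd (snd (snd (field us (z1 s, z2 s, z3 s, z4 s))))"
    using z_bounds[OF s(1)] viable_bounds[OF s(1)] AWb_pos
    by (intro field_quasimonotone(4)) linarith+
  then show "snd (snd (snd (field (u s) (x s)))) \<le> snd (snd (snd (field us (z1 s, z2 s, z3 s, z4 s))))"
    by (simp only: x_components)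
qed (simp_all add: y_initial_components)

lemma y3_le_LW_max: "t \<ge> 0 \<Longrightarrow> y3 t \<le> LW_max"
proof (rule integral_upper_barrier[OF y_component_integrals(3)])
  fix s assume s: "s \<ge> 0" "LW_max \<le> y3 s"
  have "z3 s = LW_max" unfolding z3_def by (rule clip_eq_upper[OF s(2) x_below_max(1)[OF s(1)]])
  moreover have "\<alpha>W * z4 s - \<nu> * LW_max - \<mu> * (1 + k * (z1 s + LW_max)) * LW_max + us \<le> 0"
    using LW_rate_nonpos_at_ceiling[OF lyapunov_bound_nonneg z_bounds(1)[OF s(1)]]
      z_bounds(8)[OF s(1)]
    by (simp add: LW_max_def AW_max_def)
  ultimately show "fst (snd (snd (field us (z1 s, z2 s, z3 s, z4 s)))) \<le> 0"
    by (simp add: field_def)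
qed (simp_all add: y_initial_components x_below_max(1))

lemma y4_le_AW_max: "t \<ge> 0 \<Longrightarrow> y4 t \<le> AW_max"
proof (rule integral_upper_barrier[OF y_component_integrals(4)])
  fix s assume s: "s \<ge> 0" "AW_max \<le> y4 s"
  have "z4 s = AW_max" unfolding z4_def by (rule clip_eq_upper[OF s(2) x_below_max(2)[OF s(1)]])
  moreover have "\<nu> * z3 s - \<mu>W * AW_max \<le> 0"
    using AW_rate_nonpos_at_ceiling[of "z3 s" lyapunov_bound] z_bounds(6)[OF s(1)]
    by (simp add: LW_max_def AW_max_def)
  ultimately show "snd (snd (snd (field us (z1 s, z2 s, z3 s, z4 s)))) \<le> 0"
    by (simp add: field_def)
qed (simp_all add: y_initial_components x_below_max(2))


lemma clamped_along_y_inactive: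
  assumes "s \<ge> 0"
  shows "clamped s (y s) = y s"
proof -
  have "z1 s = y1 s" "z2 s = y2 s" "z3 s = y3 s" "z4 s = y4 s"
    using assms y1_le_x1 y1_nonneg y2_le_x2 y2_nonneg x3_le_y3 y3_le_LW_max x4_le_y4 y4_le_AW_max
    by (simp_all add: z1_def z2_def z3_def z4_def clip_eq_self)
  then show ?thesis
    unfolding clamped_along_y[OF assms] by (simp add: y_components)
qed

lemma y_sharp_solution: "is_solution (\<lambda>x u. fdyn \<alpha>U \<alpha>W \<nu> \<mu> k \<mu>U \<mu>W x us) (\<lambda>_. us) x0 y"
  unfolding is_solution_def
proof (intro conjI allI impI)
  show "y 0 = x0" by (rule y_initial)
  fix t :: real assume t: "0 \<le> t"
  show "y t \<in> stateX"
    using y1_nonneg[OF t] y2_nonneg[OF t] order_trans[OF viable_bounds(5) x3_le_y3, OF t t]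
      order_trans[OF less_imp_le[OF AWb_pos] order_trans[OF viable_bounds(7) x4_le_y4, OF t t]]
    by (simp add: y_components stateX_def)
  show "((\<lambda>s. fdyn \<alpha>U \<alpha>W \<nu> \<mu> k \<mu>U \<mu>W (y s) us) has_integral y t - x0) {0..t}"
  proof (rule has_integral_eq[OF _ clamped_solution[OF t]])
    fix s assume "s \<in> {0..t}"
    then have "s \<ge> 0" by simp
    have "y2 s + y4 s \<noteq> 0"
      using y2_nonneg[OF \<open>s \<ge> 0\<close>] x4_le_y4[OF \<open>s \<ge> 0\<close>] viable_bounds(7)[OF \<open>s \<ge> 0\<close>] AWb_pos
      by linarith
    then show "clamped_field s (y s) = fdyn \<alpha>U \<alpha>W \<nu> \<mu> k \<mu>U \<mu>W (y s) us"
      unfolding clamped_field_def clamped_along_y_inactive[OF \<open>s \<ge> 0\<close>]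
      by (simp add: y_components fdyn_eq_field)
  qed
qed

lemma y_viable:
  assumes "t \<ge> 0"
  shows "(y t, us) \<in> desirable us LUb AUb LWb AWb"
proof -
  note bounds = viable_bounds[OF assms]
  have "0 \<le> y1 t" "y1 t \<le> LUb" "0 \<le> y2 t" "y2 t \<le> AUb"
    "LWb \<le> y3 t" "0 \<le> y3 t" "AWb \<le> y4 t" "0 \<le> y4 t"
    using y1_nonneg[OF assms] y1_le_x1[OF assms] y2_nonneg[OF assms] y2_le_x2[OF assms]
      x3_le_y3[OF assms] x4_le_y4[OF assms] bounds AWb_pos
    by linarith+
  then show ?thesis using pos by (simp add: y_components desirable_def stateX_def)
qed

end

context viable_trajectory
begin

lemma sharp_viable_solution_exists:
  "\<exists>y. is_solution (\<lambda>x u. fdyn \<alpha>U \<alpha>W \<nu> \<mu> k \<mu>U \<mu>W x us) (\<lambda>_. us) x0 y \<and>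
     (\<forall>t\<ge>0. (y t, us) \<in> desirable us LUb AUb LWb AWb)"
proof -
  obtain y where "\<And>t. t \<ge> 0 \<Longrightarrow> ((\<lambda>s. clamped_field s (y s)) has_integral (y t - x0)) {0..t}"
    using clamped_solution_exists by blast
  then interpret clamped_trajectory \<alpha>U \<alpha>W \<nu> \<mu> k \<mu>U \<mu>W us LUb AUb LWb AWb x0 u x y
    by unfold_locales
  show ?thesis using y_sharp_solution y_viable by blast
qed

end

lemma viab_subset_viab_sharp:
  assumes "\<alpha>U > 0" "\<alpha>W > 0" "\<nu> > 0" "\<mu> > 0" "k > 0" "\<mu>U > 0" "\<mu>W > 0" "us > 0" "AWb > 0"
  shows "viab (fdyn \<alpha>U \<alpha>W \<nu> \<mu> k \<mu>U \<mu>W) us (desirable us LUb AUb LWb AWb)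
    \<subseteq> viab (\<lambda>x u. fdyn \<alpha>U \<alpha>W \<nu> \<mu> k \<mu>U \<mu>W x us) us (desirable us LUb AUb LWb AWb)"
proof
  fix x0 assume "x0 \<in> viab (fdyn \<alpha>U \<alpha>W \<nu> \<mu> k \<mu>U \<mu>W) us (desirable us LUb AUb LWb AWb)"
  then obtain u x where x0: "x0 \<in> stateX"
    and solution: "is_solution (fdyn \<alpha>U \<alpha>W \<nu> \<mu> k \<mu>U \<mu>W) u x0 x"
    and viable: "\<And>t. t \<ge> 0 \<Longrightarrow> (x t, u t) \<in> desirable us LUb AUb LWb AWb"
    unfolding viab_def by blast
  interpret viable_trajectory \<alpha>U \<alpha>W \<nu> \<mu> k \<mu>U \<mu>W us LUb AUb LWb AWb x0 u x
    by unfold_locales (simp_all add: assms solution viable)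
  have "admissible_control us (\<lambda>_. us)"
    using assms(8) by (simp add: admissible_control_def)
  with x0 sharp_viable_solution_exists
  show "x0 \<in> viab (\<lambda>x u. fdyn \<alpha>U \<alpha>W \<nu> \<mu> k \<mu>U \<mu>W x us) us (desirable us LUb AUb LWb AWb)"
    unfolding viab_def by blast
qed

lemma viab_constant_control_subset:
  assumes "0 \<le> us"
  shows "viab (\<lambda>x u. F x us) us (desirable us LUb AUb LWb AWb) \<subseteq> viab F us (desirable us LUb AUb LWb AWb)"
proof
  fix x0 assume "x0 \<in> viab (\<lambda>x u. F x us) us (desirable us LUb AUb LWb AWb)"
  then obtain u x where x0: "x0 \<in> stateX" and solution: "is_solution (\<lambda>x u. F x us) u x0 x"
    and viable: "\<And>t. t \<ge> 0 \<Longrightarrow> (x t, u t) \<in> desirable us LUb AUb LWb AWb"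
    unfolding viab_def by blast
  have "admissible_control us (\<lambda>_. us)"
    using assms by (simp add: admissible_control_def)
  moreover have "is_solution F (\<lambda>_. us) x0 x"
    using solution by (simp add: is_solution_def)
  moreover have "(x t, us) \<in> desirable us LUb AUb LWb AWb" if "t \<ge> 0" for t
    using viable[OF that] assms by (auto simp: desirable_def)
  ultimately show "x0 \<in> viab F us (desirable us LUb AUb LWb AWb)"
    unfolding viab_def using x0 by blast
qed

theorem mainTheorem4:
  fixes \<alpha>U \<alpha>W \<nu> \<mu> k \<mu>U \<mu>W us LUb AUb LWb AWb :: real
  assumes "\<alpha>U > 0" "\<alpha>W > 0" "\<nu> > 0" "\<mu> > 0" "k > 0" "\<mu>U > 0" "\<mu>W > 0"
    and "us > 0"
    and "LUb > 0" "AUb > 0" "LWb > 0" "AWb > 0"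
  shows "viab (fdyn \<alpha>U \<alpha>W \<nu> \<mu> k \<mu>U \<mu>W) us (desirable us LUb AUb LWb AWb)
       = viab (\<lambda>x u. fdyn \<alpha>U \<alpha>W \<nu> \<mu> k \<mu>U \<mu>W x us) us (desirable us LUb AUb LWb AWb)"
proof (rule equalityI)
  show "viab (fdyn \<alpha>U \<alpha>W \<nu> \<mu> k \<mu>U \<mu>W) us (desirable us LUb AUb LWb AWb)
      \<subseteq> viab (\<lambda>x u. fdyn \<alpha>U \<alpha>W \<nu> \<mu> k \<mu>U \<mu>W x us) us (desirable us LUb AUb LWb AWb)"
    using assms by (intro viab_subset_viab_sharp)
  show "viab (\<lambda>x u. fdyn \<alpha>U \<alpha>W \<nu> \<mu> k \<mu>U \<mu>W x us) us (desirable us LUb AUb LWb AWb)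
      \<subseteq> viab (fdyn \<alpha>U \<alpha>W \<nu> \<mu> k \<mu>U \<mu>W) us (desirable us LUb AUb LWb AWb)"
    using assms by (intro viab_constant_control_subset) simp
qed

end
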